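(* Let $\mathcal{A}$ be a category of cubes. The following conditions are equivalent: (1) $\mathcal{A}$ is shell-complete; (2) for any $p,q\geq 2$ and any map of $\mathcal A$-sets $x:\partial\mathcal{A}[p]\to\mathcal{A}[q]$, the set map $x_0:[p]\to[q]$ belongs to $\mathcal{A}$; (3) for any $p,q\geq2$, any map of $\mathcal A$-sets $x:\partial\mathcal{A}[p]\to\mathcal{A}[q]$ factors uniquely as a composite $\partial\mathcal{A}[p]\subset\mathcal{A}[p]\to\mathcal{A}[q]$.
   Context: $[0]=\{()\}$, $[n]=\{0,1\}^n$ ($n\ge1$) with the product order; ${\rm PoSet}$ is posets with strictly increasing maps. Face maps $\delta_i^\alpha:[n-1]\to[n]$ insert $\alpha\in\{0,1\}$ at position $i$; $\square$ is the subcategory of ${\rm PoSet}$ with objects $[n]$ generated by face maps. A map $[m]\to[n]$ is adjacency-preserving if strictly increasing and sends pairs at Hamming distance $1$ to pairs at Hamming distance $1$. A category of cubes is a subcategory $\mathcal A\subset{\rm PoSet}$ with objects $\{[n]:n\ge0\}$, containing $\square$, whose morphisms are adjacency-preserving. An $\mathcal A$-set is a presheaf on $\mathcal A$; $\mathcal A[p]=\mathcal A(-,[p])$; $\partial\mathcal A[p]$ is the subpresheaf of $\mathcal A[p]$ with the same $k$-cubes for $k<p$ and none in dimensions $\ge p$. For a map $x$ of $\mathcal A$-sets from $\partial\mathcal A[p]$ (or $\mathcal A[p]$) to $\mathcal A[q]$, $x_0$ is its component in dimension $0$, viewed via $\mathcal A([0],[n])\cong[n]$ as a set map $[p]\to[q]$.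 $\mathrm{cosk}_1^{\mathcal A}$ is the right adjoint of the truncation $K\mapsto K_{\le1}$ from $\mathcal A$-sets to presheaves on the full subcategory on $[0],[1]$. $\mathcal A$ is shell-complete if for every $p\ge2$ the canonical map $\mathcal A[p]\to\mathrm{cosk}_1^{\mathcal A}(\mathcal A[p]_{\le1})$ (adjoint to the identity) is an isomorphism. *)

theory Defs
  imports "HOL-Library.FuncSet"
begin

text \<open>The poset [n] = {0,1}^n, encoded as boolean lists of length n
  (False = 0, True = 1); [0] = {[]} is the one-point poset.\<close>
definition cube :: "nat \<Rightarrow> bool list set" where
  "cube n = {v. length v = n}"

definition cle :: "bool list \<Rightarrow> bool list \<Rightarrow> bool" where
  "cle x y \<longleftrightarrow> list_all2 (\<le>) x y"

definition clt :: "bool list \<Rightarrow> bool list \<Rightarrow> bool" where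
  "clt x y \<longleftrightarrow> cle x y \<and> x \<noteq> y"

definition hamming :: "bool list \<Rightarrow> bool list \<Rightarrow> nat" where
  "hamming x y = card {i. i < length x \<and> x ! i \<noteq> y ! i}"

definition strictly_increasing :: "nat \<Rightarrow> (bool list \<Rightarrow> bool list) \<Rightarrow> bool" where
  "strictly_increasing m f \<longleftrightarrow>
     (\<forall>x\<in>cube m. \<forall>y\<in>cube m. clt x y \<longrightarrow> clt (f x) (f y))"

definition adjacency_preserving :: "nat \<Rightarrow> (bool list \<Rightarrow> bool list) \<Rightarrow> bool" where
  "adjacency_preserving m f \<longleftrightarrow> strictly_increasing m f \<and>
     (\<forall>x\<in>cube m. \<forall>y\<in>cube m. hamming x y = 1 \<longrightarrow> hamming (f x) (f y) = 1)"

text \<open>Face map delta_i^alpha : [m] -> [m+1], inserting alpha at position i (0-based, i \<le> m).\<close>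
definition face :: "nat \<Rightarrow> bool \<Rightarrow> bool list \<Rightarrow> bool list" where
  "face i \<alpha> v = take i v @ [\<alpha>] @ drop i v"

text \<open>A category of cubes: for each m n, a set A m n of (extensional) set maps [m] -> [n],
  closed under identities and composition (a subcategory of PoSet on the objects [n]),
  containing all face maps (hence the cube category generated by them), and all of whose
  morphisms are adjacency-preserving.\<close>
definition category_of_cubes :: "(nat \<Rightarrow> nat \<Rightarrow> (bool list \<Rightarrow> bool list) set) \<Rightarrow> bool" where
  "category_of_cubes A \<longleftrightarrow>
     (\<forall>m n. \<forall>f\<in>A m n. f \<in> cube m \<rightarrow>\<^sub>E cube n \<and> adjacency_preserving m f) \<and>
     (\<forall>n. restrict id (cube n) \<in> A n n) \<and>
     (\<forall>l m n f g. f \<in> A l m \<longrightarrow> g \<in> A m n \<longrightarrow> compose (cube l) g f \<in> A l n) \<and>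
     (\<forall>m i \<alpha>. i \<le> m \<longrightarrow> restrict (face i \<alpha>) (cube m) \<in> A m (Suc m))"

text \<open>Maps of presheaves from the subpresheaf of the representable A[n] consisting of the
  cubes in the dimensions D to the representable A[q], where naturality is required along all
  morphisms of A between dimensions in D.
  With D = {..<p} and n = p these are the maps  \<partial>A[p] \<rightarrow> A[q];
  with D = UNIV they are the maps A[n] \<rightarrow> A[q];
  with D = {0,1} they are the maps of truncated presheaves A[n]_{\<le>1} \<rightarrow> A[q]_{\<le>1}
  (presheaves on the full subcategory on [0],[1]).
  Components are taken extensional so that equality of maps is equality of terms.\<close>
definition psh_hom ::
  "(nat \<Rightarrow> nat \<Rightarrow> (bool list \<Rightarrow> bool list) set) \<Rightarrow> nat set \<Rightarrow> nat \<Rightarrow> nat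
     \<Rightarrow> (nat \<Rightarrow> (bool list \<Rightarrow> bool list) \<Rightarrow> (bool list \<Rightarrow> bool list)) set" where
  "psh_hom A D n q =
     {t \<in> (\<Pi>\<^sub>E k\<in>D. (A k n \<rightarrow>\<^sub>E A k q)).
        \<forall>j\<in>D. \<forall>k\<in>D. \<forall>f\<in>A k n. \<forall>g\<in>A j k.
          t j (compose (cube j) f g) = compose (cube j) (t k f) g}"

text \<open>cosk_1(A[p]_{\<le>1}) in dimension n is Hom(A[n]_{\<le>1}, A[p]_{\<le>1}); the canonical map
  A[p] \<rightarrow> cosk_1(A[p]_{\<le>1}) (unit of the adjunction) sends f \<in> A(n,p) to postcomposition
  with f on 0- and 1-cubes.\<close>
definition cosk_unit ::
  "(nat \<Rightarrow> nat \<Rightarrow> (bool list \<Rightarrow> bool list) set) \<Rightarrow> nat \<Rightarrow> (bool list \<Rightarrow> bool list)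
     \<Rightarrow> (nat \<Rightarrow> (bool list \<Rightarrow> bool list) \<Rightarrow> (bool list \<Rightarrow> bool list))" where
  "cosk_unit A n f = (\<lambda>k\<in>{0,1}. \<lambda>g\<in>A k n. compose (cube k) f g)"

definition shell_complete :: "(nat \<Rightarrow> nat \<Rightarrow> (bool list \<Rightarrow> bool list) set) \<Rightarrow> bool" where
  "shell_complete A \<longleftrightarrow>
     (\<forall>p\<ge>2. \<forall>n. bij_betw (cosk_unit A n) (A n p) (psh_hom A {0,1} n p))"

text \<open>The dimension-0 component of a map x, viewed via A([0],[n]) = [n] as a set map [p] \<rightarrow> [q]:
  a vertex v corresponds to the map [0] \<rightarrow> [p] with value v.\<close>
definition vertex_map ::
  "nat \<Rightarrow> (nat \<Rightarrow> (bool list \<Rightarrow> bool list) \<Rightarrow> (bool list \<Rightarrow> bool list)) \<Rightarrow> bool list \<Rightarrow> bool list" where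
  "vertex_map p x = (\<lambda>v\<in>cube p. x 0 (\<lambda>u\<in>cube 0. v) [])"

end

theory Submission
  imports Defs
begin

text \<open>
  A map of A-sets into a representable A[q], defined on a subpresheaf of A[n] that contains the
  vertices, is determined by what it does to vertices: by naturality along the vertex inclusions
  [0] \<rightarrow> [k], every component is postcomposition with the induced set map [n] \<rightarrow> [q]. Hence such a
  map extends (necessarily uniquely) to A[n] exactly when this vertex map is a morphism of A, which
  gives (2) \<Longleftrightarrow> (3), and the canonical map to the 1-coskeleton is always injective. For surjectivity
  under (2), a map from the 1-truncation of A[n] has vertex maps in A after pulling back along every
  g : [k] \<rightarrow> [n] with k < n (by induction on n), so it defines a map on \<partial>A[n], whose vertex map
  lies in A by (2).
\<close>

definition point :: "bool list \<Rightarrow> bool list \<Rightarrow> bool list" where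
  "point v = (\<lambda>u\<in>cube 0. v)"

definition postcomp ::
  "(nat \<Rightarrow> nat \<Rightarrow> (bool list \<Rightarrow> bool list) set) \<Rightarrow> nat set \<Rightarrow> nat \<Rightarrow> (bool list \<Rightarrow> bool list)
     \<Rightarrow> (nat \<Rightarrow> (bool list \<Rightarrow> bool list) \<Rightarrow> (bool list \<Rightarrow> bool list))" where
  "postcomp A D n \<phi> = (\<lambda>k\<in>D. \<lambda>g\<in>A k n. compose (cube k) \<phi> g)"

definition pullback ::
  "(nat \<Rightarrow> nat \<Rightarrow> (bool list \<Rightarrow> bool list) set) \<Rightarrow> nat set \<Rightarrow> nat \<Rightarrow> (bool list \<Rightarrow> bool list)
     \<Rightarrow> (nat \<Rightarrow> (bool list \<Rightarrow> bool list) \<Rightarrow> (bool list \<Rightarrow> bool list))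
     \<Rightarrow> (nat \<Rightarrow> (bool list \<Rightarrow> bool list) \<Rightarrow> (bool list \<Rightarrow> bool list))" where
  "pullback A D k g t = (\<lambda>j\<in>D. \<lambda>h\<in>A j k. t j (compose (cube j) g h))"

lemma cube_0: "cube 0 = {[]}"
  by (auto simp: cube_def)

lemma vertex_map_eq: "vertex_map n t = (\<lambda>v\<in>cube n. t 0 (point v) [])"
  by (simp add: vertex_map_def point_def)

lemma vertex_map_extensional: "vertex_map n t \<in> extensional (cube n)"
  by (simp add: vertex_map_def)

lemma cosk_unit_eq_postcomp: "cosk_unit A n f = postcomp A {0,1} n f"
  by (simp add: cosk_unit_def postcomp_def)

lemma compose_point: "compose (cube 0) f (point v) = point (f v)"
  by (auto simp: compose_def point_def)

lemma point_apply: "point v [] = v"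
  by (simp add: point_def cube_0)

context
  fixes A :: "nat \<Rightarrow> nat \<Rightarrow> (bool list \<Rightarrow> bool list) set"
  assumes A: "category_of_cubes A"
begin

lemma cubes_PiE: "f \<in> A m n \<Longrightarrow> f \<in> cube m \<rightarrow>\<^sub>E cube n"
  using A by (auto simp: category_of_cubes_def)

lemma cubes_Pi: "f \<in> A m n \<Longrightarrow> f \<in> cube m \<rightarrow> cube n"
  using cubes_PiE by auto

lemma cubes_extensional: "f \<in> A m n \<Longrightarrow> f \<in> extensional (cube m)"
  using cubes_PiE by (auto simp: PiE_iff)

lemma cubes_id: "restrict id (cube n) \<in> A n n"
  using A by (auto simp: category_of_cubes_def)

lemma cubes_compose: "f \<in> A l m \<Longrightarrow> g \<in> A m n \<Longrightarrow> compose (cube l) g f \<in> A l n"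
  using A by (auto simp: category_of_cubes_def)

lemma cubes_face: "i \<le> m \<Longrightarrow> restrict (face i \<alpha>) (cube m) \<in> A m (Suc m)"
  using A by (auto simp: category_of_cubes_def)

lemma point_in_cubes: "v \<in> cube n \<Longrightarrow> point v \<in> A 0 n"
proof (induction n arbitrary: v)
  case 0
  then have "point v = restrict id (cube 0)"
    by (auto simp: point_def cube_def)
  then show ?case
    using cubes_id[of 0] by metis
next
  case (Suc n)
  then obtain \<alpha> w where v: "v = \<alpha> # w" and w: "w \<in> cube n"
    by (cases v) (auto simp: cube_def)
  have "compose (cube 0) (restrict (face 0 \<alpha>) (cube n)) (point w) = point v"
    using v w by (auto simp: compose_def point_def face_def)
  then show ?case
    using cubes_compose[OF Suc.IH[OF w] cubes_face[of 0 n \<alpha>]] by simp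
qed

lemma psh_hom_in:
  "t \<in> psh_hom A D n q \<Longrightarrow> k \<in> D \<Longrightarrow> g \<in> A k n \<Longrightarrow> t k g \<in> A k q"
  by (auto simp: psh_hom_def)

lemma psh_hom_natural:
  "t \<in> psh_hom A D n q \<Longrightarrow> j \<in> D \<Longrightarrow> k \<in> D \<Longrightarrow> g \<in> A k n \<Longrightarrow> h \<in> A j k \<Longrightarrow>
     t j (compose (cube j) g h) = compose (cube j) (t k g) h"
  by (auto simp: psh_hom_def)

lemma psh_hom_extensional: "t \<in> psh_hom A D n q \<Longrightarrow> t \<in> extensional D"
  by (auto simp: psh_hom_def PiE_def)

lemma psh_hom_component_extensional:
  "t \<in> psh_hom A D n q \<Longrightarrow> k \<in> D \<Longrightarrow> t k \<in> extensional (A k n)"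
  by (auto simp: psh_hom_def PiE_def)

lemma psh_hom_apply:
  assumes t: "t \<in> psh_hom A D n q" and "0 \<in> D" "k \<in> D" and g: "g \<in> A k n"
  shows "t k g = compose (cube k) (vertex_map n t) g"
proof
  fix u
  show "t k g u = compose (cube k) (vertex_map n t) g u"
  proof (cases "u \<in> cube k")
    case True
    have "t k g u = compose (cube 0) (t k g) (point u) []"
      by (simp add: compose_point point_apply)
    also have "\<dots> = t 0 (point (g u)) []"
      using psh_hom_natural[OF t assms(2,3) g point_in_cubes[OF True]] by (simp add: compose_point)
    finally show ?thesis
      using True cubes_Pi[OF g] by (auto simp: compose_def vertex_map_eq)
  next
    case False
    then show ?thesis
      using cubes_PiE[OF psh_hom_in[OF t assms(3) g]] by (auto simp: compose_def)
  qed
qed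

lemma psh_hom_eqI:
  assumes "t \<in> psh_hom A D n q" "t' \<in> psh_hom A D n q" "0 \<in> D"
    and "vertex_map n t = vertex_map n t'"
  shows "t = t'"
proof (rule extensionalityI[OF psh_hom_extensional[OF assms(1)] psh_hom_extensional[OF assms(2)]])
  fix k assume k: "k \<in> D"
  show "t k = t' k"
    by (rule extensionalityI[OF psh_hom_component_extensional[OF assms(1) k]
          psh_hom_component_extensional[OF assms(2) k]])
      (use assms k in \<open>simp add: psh_hom_apply\<close>)
qed

lemma vertex_map_id_component:
  assumes "t \<in> psh_hom A D n q" "0 \<in> D" "n \<in> D"
  shows "vertex_map n t = t n (restrict id (cube n))"
  using psh_hom_apply[OF assms cubes_id]
  by (simp add: compose_def vertex_map_def cong: restrict_cong)

lemma vertex_map_restrict: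
  "0 \<in> D \<Longrightarrow> vertex_map n (restrict t D) = vertex_map n t"
  by (simp add: vertex_map_def)

lemma psh_hom_restrict:
  "t \<in> psh_hom A D n q \<Longrightarrow> D' \<subseteq> D \<Longrightarrow> restrict t D' \<in> psh_hom A D' n q"
  unfolding psh_hom_def by (auto simp: subset_iff)

lemma postcomp_in_psh_hom:
  assumes "\<And>k g. k \<in> D \<Longrightarrow> g \<in> A k n \<Longrightarrow> compose (cube k) \<phi> g \<in> A k q"
  shows "postcomp A D n \<phi> \<in> psh_hom A D n q"
  unfolding psh_hom_def
proof (intro CollectI conjI ballI)
  show "postcomp A D n \<phi> \<in> (\<Pi>\<^sub>E k\<in>D. A k n \<rightarrow>\<^sub>E A k q)"
    using assms by (auto simp: postcomp_def)
next
  fix j k g h assume "j \<in> D" "k \<in> D" "g \<in> A k n" "h \<in> A j k"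
  then show "postcomp A D n \<phi> j (compose (cube j) g h)
      = compose (cube j) (postcomp A D n \<phi> k g) h"
    using cubes_compose compose_assoc[OF cubes_Pi, of h j k \<phi> g]
    by (simp add: postcomp_def)
qed

lemma postcomp_cubes_in_psh_hom: "f \<in> A n q \<Longrightarrow> postcomp A D n f \<in> psh_hom A D n q"
  by (intro postcomp_in_psh_hom cubes_compose)

lemma vertex_map_postcomp:
  assumes "0 \<in> D" "\<phi> \<in> extensional (cube n)"
  shows "vertex_map n (postcomp A D n \<phi>) = \<phi>"
  using assms point_in_cubes
  by (auto simp: vertex_map_eq postcomp_def compose_point point_apply extensional_def
      intro!: extensionalityI[of _ "cube n"])

lemma psh_hom_eq_postcomp:
  assumes t: "t \<in> psh_hom A D n q" and "0 \<in> D" and f: "vertex_map n t \<in> A n q"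
  shows "postcomp A D n (vertex_map n t) = t"
proof (rule psh_hom_eqI[OF postcomp_cubes_in_psh_hom[OF f] t \<open>0 \<in> D\<close>])
  show "vertex_map n (postcomp A D n (vertex_map n t)) = vertex_map n t"
    using \<open>0 \<in> D\<close> by (simp add: vertex_map_postcomp vertex_map_extensional)
qed

lemma pullback_in_psh_hom:
  assumes t: "t \<in> psh_hom A D n q" and g: "g \<in> A k n"
  shows "pullback A D k g t \<in> psh_hom A D k q"
  unfolding psh_hom_def
proof (intro CollectI conjI ballI)
  show "pullback A D k g t \<in> (\<Pi>\<^sub>E j\<in>D. A j k \<rightarrow>\<^sub>E A j q)"
    using psh_hom_in[OF t _ cubes_compose[OF _ g]] by (auto simp: pullback_def)
next
  fix i j h h' assume i: "i \<in> D" and j: "j \<in> D" and h: "h \<in> A j k" and h': "h' \<in> A i j"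
  have "compose (cube i) g (compose (cube i) h h') = compose (cube i) (compose (cube j) g h) h'"
    using compose_assoc[OF cubes_Pi[OF h']] .
  then show "pullback A D k g t i (compose (cube i) h h')
      = compose (cube i) (pullback A D k g t j h) h'"
    using cubes_compose[OF h' h] h i j psh_hom_natural[OF t i j cubes_compose[OF h g] h']
    by (simp add: pullback_def)
qed

lemma vertex_map_pullback:
  assumes "0 \<in> D" and g: "g \<in> A k n"
  shows "vertex_map k (pullback A D k g t) = compose (cube k) (vertex_map n t) g"
  unfolding vertex_map_eq compose_def
proof (rule restrict_ext)
  fix u assume u: "u \<in> cube k"
  then have "pullback A D k g t 0 (point u) = t 0 (point (g u))"
    using assms point_in_cubes by (simp add: pullback_def compose_point)
  then show "pullback A D k g t 0 (point u) [] = (\<lambda>v\<in>cube n. t 0 (point v) []) (g u)"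
    using cubes_Pi[OF g] u by auto
qed

lemma extends_uniquely_iff_vertex_map:
  assumes "0 \<in> D" and x: "x \<in> psh_hom A D n q"
  shows "(\<exists>!y. y \<in> psh_hom A UNIV n q \<and> restrict y D = x) \<longleftrightarrow> vertex_map n x \<in> A n q"
proof
  assume "\<exists>!y. y \<in> psh_hom A UNIV n q \<and> restrict y D = x"
  then obtain y where y: "y \<in> psh_hom A UNIV n q" and "restrict y D = x"
    by blast
  then have "vertex_map n x = y n (restrict id (cube n))"
    using \<open>0 \<in> D\<close> by (metis vertex_map_restrict vertex_map_id_component UNIV_I)
  then show "vertex_map n x \<in> A n q"
    using psh_hom_in[OF y UNIV_I cubes_id] by simp
next
  assume f: "vertex_map n x \<in> A n q"
  let ?y = "postcomp A UNIV n (vertex_map n x)"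
  have y: "?y \<in> psh_hom A UNIV n q"
    by (rule postcomp_cubes_in_psh_hom[OF f])
  have "restrict ?y D = postcomp A D n (vertex_map n x)"
    by (auto simp: postcomp_def)
  also have "\<dots> = x"
    by (rule psh_hom_eq_postcomp[OF x \<open>0 \<in> D\<close> f])
  finally have "restrict ?y D = x" .
  moreover have "y' = ?y" if y': "y' \<in> psh_hom A UNIV n q" and "restrict y' D = x" for y'
  proof (rule psh_hom_eqI[OF y' y UNIV_I])
    show "vertex_map n y' = vertex_map n ?y"
      using vertex_map_restrict[OF \<open>0 \<in> D\<close>, of n y'] vertex_map_restrict[OF \<open>0 \<in> D\<close>, of n ?y]
        \<open>restrict y' D = x\<close> \<open>restrict ?y D = x\<close> by simp
  qed
  ultimately show "\<exists>!y. y \<in> psh_hom A UNIV n q \<and> restrict y D = x"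
    using y by (intro ex1I[of _ ?y]) blast+
qed

lemma cosk_unit_bij_iff:
  "bij_betw (cosk_unit A n) (A n p) (psh_hom A {0,1} n p) \<longleftrightarrow>
     (\<forall>t\<in>psh_hom A {0,1} n p. vertex_map n t \<in> A n p)"
proof
  assume "bij_betw (cosk_unit A n) (A n p) (psh_hom A {0,1} n p)"
  then have onto: "postcomp A {0,1} n ` A n p = psh_hom A {0,1} n p"
    by (simp add: bij_betw_def cosk_unit_eq_postcomp)
  show "\<forall>t\<in>psh_hom A {0,1} n p. vertex_map n t \<in> A n p"
  proof
    fix t assume "t \<in> psh_hom A {0,1} n p"
    then obtain f where "f \<in> A n p" "t = postcomp A {0,1} n f"
      using onto by blast
    then show "vertex_map n t \<in> A n p"
      by (simp add: vertex_map_postcomp cubes_extensional)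
  qed
next
  assume surj: "\<forall>t\<in>psh_hom A {0,1} n p. vertex_map n t \<in> A n p"
  have "inj_on (postcomp A {0,1} n) (A n p)"
    by (rule inj_on_inverseI[of _ "vertex_map n"]) (simp add: vertex_map_postcomp cubes_extensional)
  moreover have "psh_hom A {0,1} n p \<subseteq> postcomp A {0,1} n ` A n p"
  proof
    fix t assume t: "t \<in> psh_hom A {0,1} n p"
    then have "t = postcomp A {0,1} n (vertex_map n t)"
      using psh_hom_eq_postcomp[OF t] surj by simp
    then show "t \<in> postcomp A {0,1} n ` A n p"
      using surj t by blast
  qed
  moreover have "postcomp A {0,1} n ` A n p \<subseteq> psh_hom A {0,1} n p"
    by (intro image_subsetI postcomp_cubes_in_psh_hom)
  ultimately show "bij_betw (cosk_unit A n) (A n p) (psh_hom A {0,1} n p)"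
    unfolding bij_betw_def cosk_unit_eq_postcomp by (intro conjI equalityI)
qed

lemma vertex_map_in_cubes_if_boundary_maps_do:
  assumes boundary: "\<And>m x. 2 \<le> m \<Longrightarrow> x \<in> psh_hom A {..<m} m p \<Longrightarrow> vertex_map m x \<in> A m p"
    and t: "t \<in> psh_hom A {0,1} n p"
  shows "vertex_map n t \<in> A n p"
  using t
proof (induction n arbitrary: t rule: less_induct)
  case (less n)
  show ?case
  proof (cases "n \<in> {0,1}")
    case True
    then show ?thesis
      using less.prems by (simp add: vertex_map_id_component psh_hom_in cubes_id)
  next
    case False
    have "compose (cube k) (vertex_map n t) g \<in> A k p" if "k < n" "g \<in> A k n" for k g
      using less.IH[OF that(1) pullback_in_psh_hom[OF less.prems that(2)]]
      using vertex_map_pullback[of "{0,1}" g k n t] that(2) by simp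
    then have "postcomp A {..<n} n (vertex_map n t) \<in> psh_hom A {..<n} n p"
      by (intro postcomp_in_psh_hom) auto
    then have "vertex_map n (postcomp A {..<n} n (vertex_map n t)) \<in> A n p"
      using False by (intro boundary) auto
    then show ?thesis
      using False by (simp add: vertex_map_postcomp vertex_map_extensional)
  qed
qed

lemma shell_complete_iff_boundary_vertex_maps:
  "shell_complete A \<longleftrightarrow>
     (\<forall>p q. 2 \<le> p \<longrightarrow> 2 \<le> q \<longrightarrow> (\<forall>x\<in>psh_hom A {..<p} p q. vertex_map p x \<in> A p q))"
proof
  assume shell: "shell_complete A"
  show "\<forall>p q. 2 \<le> p \<longrightarrow> 2 \<le> q \<longrightarrow> (\<forall>x\<in>psh_hom A {..<p} p q. vertex_map p x \<in> A p q)"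
  proof (intro allI impI ballI)
    fix p q x assume "2 \<le> p" "2 \<le> q" and x: "x \<in> psh_hom A {..<p} p q"
    have "bij_betw (cosk_unit A p) (A p q) (psh_hom A {0,1} p q)"
      using shell \<open>2 \<le> q\<close> by (simp add: shell_complete_def)
    moreover have "restrict x {0,1} \<in> psh_hom A {0,1} p q"
      using x \<open>2 \<le> p\<close> by (intro psh_hom_restrict) auto
    ultimately have "vertex_map p (restrict x {0,1}) \<in> A p q"
      unfolding cosk_unit_bij_iff by blast
    then show "vertex_map p x \<in> A p q"
      by (simp add: vertex_map_restrict)
  qed
next
  assume boundary: "\<forall>p q. 2 \<le> p \<longrightarrow> 2 \<le> q \<longrightarrow> (\<forall>x\<in>psh_hom A {..<p} p q. vertex_map p x \<in> A p q)"
  have "vertex_map n t \<in> A n p" if "2 \<le> p" "t \<in> psh_hom A {0,1} n p" for p n t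
  proof (rule vertex_map_in_cubes_if_boundary_maps_do[OF _ that(2)])
    fix m x assume "2 \<le> m" "x \<in> psh_hom A {..<m} m p"
    then show "vertex_map m x \<in> A m p"
      using boundary \<open>2 \<le> p\<close> by blast
  qed
  then show "shell_complete A"
    unfolding shell_complete_def cosk_unit_bij_iff by blast
qed

end

theorem theorem7p4:
  assumes "category_of_cubes A"
  shows "(shell_complete A \<longleftrightarrow>
            (\<forall>p q. 2 \<le> p \<longrightarrow> 2 \<le> q \<longrightarrow>
               (\<forall>x\<in>psh_hom A {..<p} p q. vertex_map p x \<in> A p q)))
       \<and> (shell_complete A \<longleftrightarrow>
            (\<forall>p q. 2 \<le> p \<longrightarrow> 2 \<le> q \<longrightarrow>
               (\<forall>x\<in>psh_hom A {..<p} p q.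
                  \<exists>!y. y \<in> psh_hom A UNIV p q \<and> restrict y {..<p} = x)))"
proof -
  have "(\<exists>!y. y \<in> psh_hom A UNIV p q \<and> restrict y {..<p} = x) \<longleftrightarrow> vertex_map p x \<in> A p q"
    if "2 \<le> p" "x \<in> psh_hom A {..<p} p q" for p q x
    using extends_uniquely_iff_vertex_map[OF assms _ that(2)] that(1) by simp
  then show ?thesis
    unfolding shell_complete_iff_boundary_vertex_maps[OF assms] by (simp cong: ball_cong)
qed

end
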